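(* For every real $r\ge1$ and every $x\in[0,1]$, \[ \sum_{m\ge0}s_m(x)^r\ \ge\ \sum_{m\ge0}s_m(\tfrac12)^r, \] where $s_m(\tfrac12)=\frac{8}{\pi^2(2m+1)^2}$.
   Context: For $y\in\mathbb{R}$ let $\operatorname{sinc}(y)=\frac{\sin y}{y}$ for $y\neq0$ and $\operatorname{sinc}(0)=1$, and let $h(y)=\operatorname{sinc}^2(\pi y)$. For integers $m\ge0$, $s_m(x)=h(x+m)+h(x-(m+1))$. *)

theory Defs
  imports "HOL-Analysis.Analysis"
begin

definition sinc :: "real \<Rightarrow> real" where
  "sinc y = (if y = 0 then 1 else sin y / y)"

definition h :: "real \<Rightarrow> real" where
  "h y = (sinc (pi * y))\<^sup>2"

definition s :: "nat \<Rightarrow> real \<Rightarrow> real" where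
  "s m x = h (x + real m) + h (x - (real m + 1))"

end

theory Submission
  imports Defs
begin

(*
  For 0 < x < 1 one has s_m(x) = sin^2(pi x)/pi^2 * (1/(x+m)^2 + 1/(1-x+m)^2), and the
  partial fraction expansion of pi^2/sin^2(pi x) (the derivative of the reflection formula
  Digamma(x) - Digamma(1-x) = -pi cot(pi x)) shows that the s_m(x) sum to 1; at x = 0 and x = 1
  the sequence is (1, 0, 0, ...).  Jordan's inequality gives sin^2(pi x) <= 1 - 4 (x - 1/2)^2,
  whence s_m(x) <= s_m(1/2) for m >= 1, while s_0(1/2) is the largest of the s_m(1/2).  So s(x)
  arises from the probability vector s(1/2) by moving mass onto its largest entry, which can only
  increase the sum of r-th powers: bound each a_m^r - b_m^r below by the tangent
  r b_m^(r-1) (a_m - b_m), and then every slope r b_m^(r-1) by the slope at b_0.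
*)

lemma Gamma_reflection_real:
  fixes x :: real
  assumes "0 < x" "x < 1"
  shows "Gamma x * Gamma (1 - x) = pi / sin (pi * x)"
proof -
  have "complex_of_real (Gamma x * Gamma (1 - x)) = complex_of_real (pi / sin (pi * x))"
    using Gamma_reflection_complex[of "complex_of_real x"]
    by (simp flip: Gamma_complex_of_real sin_of_real)
  thus ?thesis
    by (simp only: of_real_eq_iff)
qed

lemma not_nonpos_Ints_unit_interval:
  fixes x :: real
  assumes "0 < x" "x < 1"
  shows "x \<notin> \<int>\<^sub>\<le>\<^sub>0" "1 - x \<notin> \<int>\<^sub>\<le>\<^sub>0"
  using assms by (auto elim!: nonpos_Ints_cases)

lemma Digamma_reflection_real:
  fixes x :: real
  assumes x: "0 < x" "x < 1"
  shows "Digamma x - Digamma (1 - x) = - pi * cot (pi * x)"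
proof -
  have sin_pos: "sin (pi * x) > 0"
    using x by (intro sin_gt_zero) auto
  define d where "d = Digamma x - Digamma (1 - x)"
  define D where "D = Gamma x * Gamma (1 - x) * d"
  have "((\<lambda>t. Gamma t * Gamma (1 - t)) has_real_derivative D) (at x)"
    unfolding D_def d_def using not_nonpos_Ints_unit_interval[OF x]
    by (auto intro!: derivative_eq_intros simp: algebra_simps)
  hence "((\<lambda>t. pi / sin (pi * t)) has_real_derivative D) (at x)"
    by (rule has_field_derivative_transform_within_open[of _ _ _ "{0<..<1}"])
       (use x in \<open>auto simp: Gamma_reflection_real\<close>)
  moreover have "((\<lambda>t. pi / sin (pi * t)) has_real_derivative
      - (pi * (cos (pi * x) * pi)) / (sin (pi * x))\<^sup>2) (at x)"
    using sin_pos by (auto intro!: derivative_eq_intros simp: power2_eq_square)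
  ultimately have "D = - (pi * (cos (pi * x) * pi)) / (sin (pi * x))\<^sup>2"
    by (rule DERIV_unique)
  hence "pi / sin (pi * x) * d = - (pi * (cos (pi * x) * pi)) / (sin (pi * x))\<^sup>2"
    by (simp add: D_def Gamma_reflection_real[OF x])
  hence "pi * (d * sin (pi * x)) = pi * (- pi * cos (pi * x))"
    using sin_pos by (simp add: field_simps power2_eq_square)
  hence "d * sin (pi * x) = - pi * cos (pi * x)"
    by (simp only: mult_left_cancel[OF pi_neq_zero])
  thus ?thesis
    using sin_pos by (simp add: d_def cot_def field_simps)
qed

lemma Polygamma_1_reflection_real:
  fixes x :: real
  assumes x: "0 < x" "x < 1"
  shows "Polygamma 1 x + Polygamma 1 (1 - x) = pi\<^sup>2 / (sin (pi * x))\<^sup>2"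
proof -
  have sin_pos: "sin (pi * x) > 0"
    using x by (intro sin_gt_zero) auto
  have "((\<lambda>t. Digamma t - Digamma (1 - t)) has_real_derivative
      Polygamma 1 x + Polygamma 1 (1 - x)) (at x)"
    using not_nonpos_Ints_unit_interval[OF x] by (auto intro!: derivative_eq_intros)
  hence "((\<lambda>t. - pi * cot (pi * t)) has_real_derivative Polygamma 1 x + Polygamma 1 (1 - x)) (at x)"
    by (rule has_field_derivative_transform_within_open[of _ _ _ "{0<..<1}"])
       (use x in \<open>auto simp: Digamma_reflection_real\<close>)
  moreover have "((\<lambda>t. - pi * cot (pi * t)) has_real_derivative pi\<^sup>2 / (sin (pi * x))\<^sup>2) (at x)"
    using sin_pos
    by (auto intro!: derivative_eq_intros DERIV_chain2[OF DERIV_cot] simp: field_simps power2_eq_square)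
  ultimately show ?thesis
    by (rule DERIV_unique)
qed

lemma sums_inverse_squares_pi_over_sin:
  fixes x :: real
  assumes "0 < x" "x < 1"
  shows "(\<lambda>k. 1 / (x + real k)\<^sup>2 + 1 / (1 - x + real k)\<^sup>2) sums (pi\<^sup>2 / (sin (pi * x))\<^sup>2)"
proof -
  have "(\<lambda>k. 1 / (y + real k)\<^sup>2) sums Polygamma 1 y" if "y > 0" for y :: real
    using Polygamma_LIMSEQ[of y 1] that by (simp add: inverse_eq_divide power2_eq_square)
  hence "(\<lambda>k. 1 / (x + real k)\<^sup>2 + 1 / (1 - x + real k)\<^sup>2) sums (Polygamma 1 x + Polygamma 1 (1 - x))"
    using assms by (intro sums_add) auto
  thus ?thesis
    using Polygamma_1_reflection_real[OF assms] by simp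
qed

lemma sin_sq_pi_shift:
  fixes x :: real and k :: int
  shows "(sin (pi * (x + real_of_int k)))\<^sup>2 = (sin (pi * x))\<^sup>2"
proof -
  have "sin (pi * (x + real_of_int k)) = sin (pi * x) * (if even k then 1 else -1)"
    by (simp add: distrib_left sin_add)
  thus ?thesis
    by simp
qed

lemma h_shift_eq:
  fixes x :: real and k :: int
  assumes "x + real_of_int k \<noteq> 0"
  shows "h (x + real_of_int k) = (sin (pi * x))\<^sup>2 / (pi\<^sup>2 * (x + real_of_int k)\<^sup>2)"
  using assms sin_sq_pi_shift[of x k]
  by (simp add: h_def sinc_def power_divide power_mult_distrib)

lemma s_eq_sin_sq:
  assumes "x + real m \<noteq> 0" "1 - x + real m \<noteq> 0"
  shows "s m x = (sin (pi * x))\<^sup>2 / pi\<^sup>2 * (1 / (x + real m)\<^sup>2 + 1 / (1 - x + real m)\<^sup>2)"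
proof -
  have "h (x + real m) = (sin (pi * x))\<^sup>2 / (pi\<^sup>2 * (x + real m)\<^sup>2)"
    using h_shift_eq[of x "int m"] assms by simp
  moreover have "h (x - (real m + 1)) = (sin (pi * x))\<^sup>2 / (pi\<^sup>2 * (1 - x + real m)\<^sup>2)"
  proof -
    have "x + real_of_int (- int m - 1) = x - (real m + 1)" "x - (real m + 1) \<noteq> 0"
      "(x - (real m + 1))\<^sup>2 = (1 - x + real m)\<^sup>2"
      using assms by (simp_all add: power2_eq_square algebra_simps)
    thus ?thesis
      using h_shift_eq[of x "- int m - 1"] by metis
  qed
  ultimately show ?thesis
    by (simp add: s_def field_simps)
qed

lemma s_nonneg: "0 \<le> s m x"
  by (simp add: s_def h_def)

lemma s_half: "s m (1/2) = 8 / (pi\<^sup>2 * (2 * real m + 1)\<^sup>2)"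
  by (subst s_eq_sin_sq) (auto simp: field_simps power2_eq_square)

lemma s_endpoint:
  assumes "x = 0 \<or> x = 1"
  shows "s m x = (if m = 0 then 1 else 0)"
proof -
  have "pi + pi * real m \<noteq> 0"
    by (simp add: add_pos_nonneg[THEN less_imp_neq, symmetric])
  thus ?thesis
    using assms by (auto simp: s_def h_def sinc_def algebra_simps simp flip: of_nat_Suc)
qed

lemma s_sums_one:
  assumes "0 \<le> x" "x \<le> 1"
  shows "(\<lambda>m. s m x) sums 1"
proof (cases "x = 0 \<or> x = 1")
  case True
  thus ?thesis
    using sums_single[of 0 "\<lambda>_. 1 :: real"] by (simp add: s_endpoint)
next
  case False
  hence x: "0 < x" "x < 1"
    using assms by auto
  have "sin (pi * x) \<noteq> 0"
    using x by (intro sin_gt_zero[THEN less_imp_neq, symmetric]) auto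
  hence "(\<lambda>m. (sin (pi * x))\<^sup>2 / pi\<^sup>2 * (1 / (x + real m)\<^sup>2 + 1 / (1 - x + real m)\<^sup>2)) sums 1"
    using sums_mult[OF sums_inverse_squares_pi_over_sin[OF x], of "(sin (pi * x))\<^sup>2 / pi\<^sup>2"] by simp
  thus ?thesis
    using x by (simp add: s_eq_sin_sq)
qed

lemma Jordan_inequality:
  fixes t :: real
  assumes "0 \<le> t" "t \<le> 1/2"
  shows "2 * t \<le> sin (pi * t)"
proof -
  have "concave_on {0..pi/2} sin"
    by (rule f''_le0_imp_concave[where f' = cos and f'' = "\<lambda>y. - sin y"])
       (auto intro!: derivative_eq_intros sin_ge_zero)
  from concave_onD[OF this, of "2 * t" 0 "pi/2"] assms
  show ?thesis
    by (simp add: mult.commute)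
qed

lemma sin_pi_sq_le:
  fixes x :: real
  assumes "0 \<le> x" "x \<le> 1"
  shows "(sin (pi * x))\<^sup>2 \<le> 1 - 4 * (x - 1/2)\<^sup>2"
proof -
  define u where "u = x - 1/2"
  have "sin (pi * x) = cos (pi * u)"
    by (simp add: u_def algebra_simps cos_diff)
  hence "(sin (pi * x))\<^sup>2 = 1 - (sin (pi * \<bar>u\<bar>))\<^sup>2"
    by (simp add: abs_if cos_squared_eq)
  moreover have "(2 * \<bar>u\<bar>)\<^sup>2 \<le> (sin (pi * \<bar>u\<bar>))\<^sup>2"
    using assms by (intro power_mono Jordan_inequality) (auto simp: u_def abs_if)
  ultimately show ?thesis
    by (simp add: u_def power_mult_distrib)
qed

lemma inverse_squares_shift_le:
  fixes c u :: real
  assumes "3/4 \<le> c\<^sup>2" "\<bar>u\<bar> < c"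
  shows "(1 - 4 * u\<^sup>2) * (1 / (c + u)\<^sup>2 + 1 / (c - u)\<^sup>2) \<le> 2 / c\<^sup>2"
proof -
  have pos: "c + u > 0" "c - u > 0" "c > 0"
    using assms by auto
  have "2 / c\<^sup>2 - (1 - 4 * u\<^sup>2) * (1 / (c + u)\<^sup>2 + 1 / (c - u)\<^sup>2)
      = 2 * u\<^sup>2 * ((4 * c\<^sup>2 - 3) * c\<^sup>2 + (4 * c\<^sup>2 + 1) * u\<^sup>2) / (c\<^sup>2 * (c + u)\<^sup>2 * (c - u)\<^sup>2)"
    using pos by (simp add: field_simps) (simp add: algebra_simps power2_eq_square eval_nat_numeral)
  also have "\<dots> \<ge> 0"
    using assms by (intro divide_nonneg_nonneg mult_nonneg_nonneg add_nonneg_nonneg) auto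
  finally show ?thesis
    by simp
qed

lemma s_le_s_half:
  assumes "0 \<le> x" "x \<le> 1" "m \<noteq> 0"
  shows "s m x \<le> s m (1/2)"
proof -
  define c where "c = real m + 1/2"
  define u where "u = x - 1/2"
  have "1 \<le> c"
    using assms by (simp add: c_def)
  hence "1 \<le> c\<^sup>2"
    by (rule one_le_power)
  hence c: "3/4 \<le> c\<^sup>2" "\<bar>u\<bar> < c"
    using \<open>1 \<le> c\<close> assms by (linarith, auto simp: u_def)
  have "s m x = (sin (pi * x))\<^sup>2 / pi\<^sup>2 * (1 / (c + u)\<^sup>2 + 1 / (c - u)\<^sup>2)"
    using assms by (subst s_eq_sin_sq) (auto simp: c_def u_def algebra_simps)
  also have "\<dots> \<le> (1 - 4 * u\<^sup>2) / pi\<^sup>2 * (1 / (c + u)\<^sup>2 + 1 / (c - u)\<^sup>2)"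
    using sin_pi_sq_le[OF assms(1,2)] by (intro mult_right_mono divide_right_mono) (auto simp: u_def)
  also have "\<dots> = (1 - 4 * u\<^sup>2) * (1 / (c + u)\<^sup>2 + 1 / (c - u)\<^sup>2) / pi\<^sup>2"
    by simp
  also have "\<dots> \<le> 2 / c\<^sup>2 / pi\<^sup>2"
    using c by (intro divide_right_mono inverse_squares_shift_le) auto
  also have "\<dots> = s m (1/2)"
    by (simp add: s_half c_def field_simps power2_eq_square)
  finally show ?thesis .
qed

lemma s_half_le_s_half_0: "s m (1/2) \<le> s 0 (1/2)"
  by (simp add: s_half power_le_one_iff frac_le)

lemma powr_above_tangent:
  fixes a b r :: real
  assumes "0 \<le> a" "0 < b" "1 \<le> r"
  shows "r * b powr (r - 1) * (a - b) \<le> a powr r - b powr r"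
proof (cases "a = 0")
  case True
  have "b powr (r - 1) * b = b powr r"
    using assms by (simp add: powr_diff)
  moreover have "b powr r \<le> r * b powr r"
    using assms by (intro mult_le_cancel_right1[THEN iffD2]) auto
  ultimately show ?thesis
    using True assms by (simp add: algebra_simps)
next
  case False
  have "((\<lambda>z. z powr r) has_real_derivative r * b powr (r - 1)) (at b within {0<..})"
    using has_real_derivative_powr[OF assms(2)] by (rule has_field_derivative_at_within)
  from convex_on_imp_above_tangent[OF powr_convex[OF assms(3)] _ _ _ this]
  show ?thesis
    using False assms by (simp add: interior_open convex_connected)
qed

lemma summable_powr:
  fixes a :: "nat \<Rightarrow> real" and r :: real
  assumes "1 \<le> r" "\<And>m. 0 \<le> a m" "summable a"
  shows "summable (\<lambda>m. a m powr r)"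
proof (rule summable_comparison_test_ev[OF _ \<open>summable a\<close>])
  have "eventually (\<lambda>m. a m < 1) sequentially"
    using order_tendstoD(2)[OF summable_LIMSEQ_zero[OF \<open>summable a\<close>], of 1] by simp
  thus "eventually (\<lambda>m. norm (a m powr r) \<le> a m) sequentially"
  proof eventually_elim
    case (elim m)
    have "a m powr r \<le> a m powr 1"
      using assms elim by (intro powr_mono') auto
    thus ?case
      using assms by simp
  qed
qed

lemma suminf_powr_le_mass_to_peak:
  fixes a b :: "nat \<Rightarrow> real" and r \<sigma> :: real
  assumes r: "1 \<le> r"
    and nonneg: "\<And>m. 0 \<le> a m" and pos: "\<And>m. 0 < b m"
    and sums: "a sums \<sigma>" "b sums \<sigma>"
    and below: "\<And>m. m \<noteq> 0 \<Longrightarrow> a m \<le> b m"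
    and peak: "\<And>m. b m \<le> b 0"
  shows "(\<Sum>m. b m powr r) \<le> (\<Sum>m. a m powr r)"
proof -
  define slope where "slope m = r * b m powr (r - 1)" for m
  have tangent: "slope 0 * (a m - b m) \<le> a m powr r - b m powr r" for m
  proof (cases "m = 0")
    case False
    have "slope m \<le> slope 0"
      unfolding slope_def using r pos peak by (intro mult_left_mono powr_mono2) (auto intro: less_imp_le)
    hence "slope 0 * (a m - b m) \<le> slope m * (a m - b m)"
      using below[OF False] by (intro mult_right_mono_neg) auto
    also have "\<dots> \<le> a m powr r - b m powr r"
      unfolding slope_def by (rule powr_above_tangent[OF nonneg pos r])
    finally show ?thesis .
  qed (simp add: slope_def powr_above_tangent[OF nonneg pos r])
  have "summable (\<lambda>m. a m powr r)" "summable (\<lambda>m. b m powr r)"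
    using sums summable_powr[OF r nonneg] summable_powr[OF r less_imp_le[OF pos]]
    by (simp_all add: sums_iff)
  hence "(\<lambda>m. a m powr r - b m powr r) sums ((\<Sum>m. a m powr r) - (\<Sum>m. b m powr r))"
    by (intro sums_diff summable_sums)
  moreover have "(\<lambda>m. slope 0 * (a m - b m)) sums (slope 0 * (\<sigma> - \<sigma>))"
    using sums by (intro sums_mult sums_diff)
  ultimately have "slope 0 * (\<sigma> - \<sigma>) \<le> (\<Sum>m. a m powr r) - (\<Sum>m. b m powr r)"
    by (intro sums_le[OF tangent])
  thus ?thesis
    by simp
qed

theorem mainTheorem7:
  fixes r x :: real
  assumes "r \<ge> 1" and "0 \<le> x" and "x \<le> 1"
  shows "(\<forall>m. s m (1/2) = 8 / (pi\<^sup>2 * (2 * real m + 1)\<^sup>2))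
     \<and> summable (\<lambda>m. s m x powr r)
     \<and> summable (\<lambda>m. s m (1/2) powr r)
     \<and> (\<Sum>m. s m x powr r) \<ge> (\<Sum>m. s m (1/2) powr r)"
proof (intro conjI allI)
  have sums: "(\<lambda>m. s m x) sums 1" "(\<lambda>m. s m (1/2)) sums 1"
    using assms by (auto intro: s_sums_one)
  show "summable (\<lambda>m. s m x powr r)" "summable (\<lambda>m. s m (1/2) powr r)"
    using sums summable_powr[OF assms(1) s_nonneg] by (simp_all add: sums_iff)
  have "s m (1/2) > 0" for m
    by (simp add: s_half)
  thus "(\<Sum>m. s m x powr r) \<ge> (\<Sum>m. s m (1/2) powr r)"
    by (rule suminf_powr_le_mass_to_peak[OF assms(1) s_nonneg _ sums s_le_s_half[OF assms(2,3)] s_half_le_s_half_0])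
qed (rule s_half)

end
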